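(* For every Young diagram $\mu$ with $m=|\mu|$ and every $n\ge1$, $$(T_n-\mathbf 1)(FS_\mu)_n=-\frac{m(m-1+zz')}{(n+1)(zz'+n)}(FS_\mu)_n+\frac{n+1-m}{(n+1)(zz'+n)}\sum_{\mu_\bullet\nearrow\mu}(z)_{\mu/\mu_\bullet}(z')_{\mu/\mu_\bullet}(FS_{\mu_\bullet})_n.$$
   Context: $\mathbb Y$ is the set of all Young diagrams (including $\varnothing$), $\mathbb Y_n$ those with $n$ boxes, $|\lambda|$ the number of boxes; $\mu\nearrow\lambda$ (equivalently $\lambda\searrow\mu$) means $\mu\subset\lambda$, $|\lambda|=|\mu|+1$. For a skew diagram $\theta$, $(z)_\theta=\prod_{(i,j)\in\theta}(z+j-i)$ ($(i,j)$ = box in row $i$, column $j$). $\dim\lambda$ is the number of standard Young tableaux of shape $\lambda$ ($\dim\varnothing=1$); $\dim(\mu,\lambda)$ is the number of chains $\mu\nearrow\cdots\nearrow\lambda$. Modified Frobenius coordinates: $\lambda=(a_1,\dots,a_d\mid b_1,\dots,b_d)$, $d$ the number of diagonal boxes, $a_i=\lambda_i-i+\frac12$, $b_i=\lambda'_i-i+\frac12$. $(z,z')$ is fixed in the principal series ($z\notin\mathbb R$, $z'=\bar z$) or complementary series ($z,z'\in(N,N+1)$, $N\in\mathbb Z$). Down transition $p^\downarrow(\nu,\lambda)=\dim\lambda/\dim\nu$ if $\lambda\nearrow\nu$, else 0; up transition for $\lambda\in\mathbb Y_n$: $p^\uparrow(\lambda,\nu)=\frac{(z)_{\nu/\lambda}(z')_{\nu/\lambda}}{zz'+n}\frac{\dim\nu}{(n+1)\dim\lambda}$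 if $\nu\searrow\lambda$, else 0. $T_n$ acts on real functions $g$ on $\mathbb Y_n$ by $(T_ng)(\lambda)=\sum_{\nu\in\mathbb Y_{n+1}}p^\uparrow(\lambda,\nu)\sum_{\tilde\lambda\in\mathbb Y_n}p^\downarrow(\nu,\tilde\lambda)g(\tilde\lambda)$; $\mathbf 1$ is the identity. $\Lambda=\mathbb R[p_1,p_2,\dots]$ (symmetric functions) is viewed as functions on $\mathbb Y$ via $p_k(\lambda)=\sum_ia_i^k+(-1)^{k-1}\sum_ib_i^k$; $f_n$ is the restriction of $f\in\Lambda$ to $\mathbb Y_n$. $FS_\mu\in\Lambda$ is the Frobenius–Schur function, characterized by $FS_\mu(\lambda)=n^{\downarrow m}\dim(\mu,\lambda)/\dim\lambda$ for all $\lambda$ ($n=|\lambda|$, $m=|\mu|$, $n^{\downarrow m}=n(n-1)\cdots(n-m+1)$). *)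

theory Defs
  imports Complex_Main
begin

definition young :: "nat list \<Rightarrow> bool" where
  "young la \<longleftrightarrow> sorted_wrt (\<ge>) la \<and> (\<forall>r \<in> set la. 0 < r)"

definition boxes :: "nat list \<Rightarrow> (nat \<times> nat) set" where
  "boxes la = {(i, j). 1 \<le> i \<and> i \<le> length la \<and> 1 \<le> j \<and> j \<le> la ! (i - 1)}"

definition ysize :: "nat list \<Rightarrow> nat" where
  "ysize la = sum_list la"

definition YD :: "nat \<Rightarrow> nat list set" where
  "YD n = {la. young la \<and> ysize la = n}"

definition nearrow :: "nat list \<Rightarrow> nat list \<Rightarrow> bool" where
  "nearrow mu la \<longleftrightarrow> young mu \<and> young la \<and> boxes mu \<subseteq> boxes la \<and> ysize la = ysize mu + 1"

definition cprod :: "complex \<Rightarrow> (nat \<times> nat) set \<Rightarrow> complex" where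
  "cprod z theta = (\<Prod>(i, j)\<in>theta. z + of_int (int j - int i))"

definition chains :: "nat list \<Rightarrow> nat list \<Rightarrow> nat list list set" where
  "chains mu la = {xs. xs \<noteq> [] \<and> hd xs = mu \<and> last xs = la \<and> (\<forall>x\<in>set xs. young x) \<and>
      (\<forall>i. i + 1 < length xs \<longrightarrow> nearrow (xs ! i) (xs ! (i + 1)))}"

definition dimrel :: "nat list \<Rightarrow> nat list \<Rightarrow> nat" where
  "dimrel mu la = card (chains mu la)"

definition ydim :: "nat list \<Rightarrow> nat" where
  "ydim la = dimrel [] la"

definition falling :: "nat \<Rightarrow> nat \<Rightarrow> complex" where
  "falling n m = (\<Prod>i<m. of_nat n - of_nat i)"

definition FS :: "nat list \<Rightarrow> nat list \<Rightarrow> complex" where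
  "FS mu la = falling (ysize la) (ysize mu) * of_nat (dimrel mu la) / of_nat (ydim la)"

definition pdown :: "nat list \<Rightarrow> nat list \<Rightarrow> complex" where
  "pdown nu la = (if nearrow la nu then of_nat (ydim la) / of_nat (ydim nu) else 0)"

definition pup :: "complex \<Rightarrow> complex \<Rightarrow> nat list \<Rightarrow> nat list \<Rightarrow> complex" where
  "pup z z' la nu = (if nearrow la nu then
      cprod z (boxes nu - boxes la) * cprod z' (boxes nu - boxes la) / (z * z' + of_nat (ysize la))
      * of_nat (ydim nu) / (of_nat (ysize la + 1) * of_nat (ydim la)) else 0)"

definition Top :: "complex \<Rightarrow> complex \<Rightarrow> nat \<Rightarrow> (nat list \<Rightarrow> complex) \<Rightarrow> nat list \<Rightarrow> complex" where
  "Top z z' n g la = (\<Sum>nu\<in>YD (n + 1). pup z z' la nu * (\<Sum>la'\<in>YD n. pdown nu la' * g la'))"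

definition admissible :: "complex \<Rightarrow> complex \<Rightarrow> bool" where
  "admissible z z' \<longleftrightarrow> (z \<notin> \<real> \<and> z' = cnj z) \<or>
     (\<exists>N::int. z \<in> \<real> \<and> z' \<in> \<real> \<and> of_int N < Re z \<and> Re z < of_int N + 1
                \<and> of_int N < Re z' \<and> Re z' < of_int N + 1)"

end

theory Submission
  imports Defs
begin

text \<open>Write \<open>w(theta) = (z)\<^sub>theta (z')\<^sub>theta\<close> for a single box \<open>theta\<close>. The branching rule
  \<open>dim(mu, nu) = \<Sum> {dim(mu, rho) | rho \<nearrow> nu}\<close> applied to the down step turns \<open>(T\<^sub>n FS\<^sub>mu)(la)\<close>
  into a multiple of \<open>W(la) = \<Sum> {w(nu/la) dim(mu, nu) | la \<nearrow> nu}\<close>. By induction on \<open>|la|\<close>,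
  \<open>W(la) = (n + 1 - m)(zz' + n + m) dim(mu, la) + \<Sum> {w(mu/mu') dim(mu', la) | mu' \<nearrow> mu}\<close>:
  expanding \<open>dim(mu, nu)\<close> once more, the two-step paths \<open>la \<nearrow> nu \<searrow> rho\<close> with \<open>rho \<noteq> la\<close> are
  traded for the paths \<open>la \<searrow> tau \<nearrow> rho\<close>, which reassemble into the \<open>W(tau)\<close>, and the leftover
  weights add up to \<open>zz' + 2|la|\<close> by the content identity: \<open>w\<close> summed over the boxes that can be
  added to \<open>la\<close>, minus \<open>w\<close> summed over the boxes that can be removed, is \<open>zz' + 2|la|\<close>.
  The theorem then follows by algebra with falling factorials; admissibility of \<open>(z, z')\<close> is
  only needed for \<open>zz' + n \<noteq> 0\<close>.\<close>

section \<open>Rows and boxes of Young diagrams\<close>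

definition row :: "nat list \<Rightarrow> nat \<Rightarrow> nat" where
  "row la i = (if i < length la then la ! i else 0)"

lemma row_beyond: "length la \<le> i \<Longrightarrow> row la i = 0"
  by (simp add: row_def)

lemma young_pos: "young la \<Longrightarrow> i < length la \<Longrightarrow> 0 < la ! i"
  by (auto simp: young_def)

lemma young_iff_row:
  "young la \<longleftrightarrow> (\<forall>k<length la. 0 < row la k) \<and> (\<forall>k. row la (Suc k) \<le> row la k)"
proof -
  have "transp ((\<ge>) :: nat \<Rightarrow> nat \<Rightarrow> bool)" by (auto simp: transp_def)
  then have "young la \<longleftrightarrow>
      (\<forall>k<length la. 0 < la ! k) \<and> (\<forall>k. Suc k < length la \<longrightarrow> la ! Suc k \<le> la ! k)"
    unfolding young_def sorted_wrt_iff_nth_Suc_transp[OF \<open>transp _\<close>] by (auto simp: in_set_conv_nth)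
  also have "\<dots> \<longleftrightarrow> (\<forall>k<length la. 0 < row la k) \<and> (\<forall>k. row la (Suc k) \<le> row la k)"
    unfolding row_def
    by (intro arg_cong2[where f = "(\<and>)"] iffI allI impI) (auto dest: Suc_lessD split: if_splits)
  finally show ?thesis .
qed

lemma row_antimono: "young la \<Longrightarrow> i \<le> j \<Longrightarrow> row la j \<le> row la i"
  using lift_Suc_antimono_le[of "row la"] by (auto simp: young_iff_row)

lemma mem_boxes_iff: "(i, j) \<in> boxes la \<longleftrightarrow> 1 \<le> i \<and> i \<le> length la \<and> 1 \<le> j \<and> j \<le> la ! (i - 1)"
  by (simp add: boxes_def)

lemma mem_boxes_iff_row: "young la \<Longrightarrow> (i, j) \<in> boxes la \<longleftrightarrow> 1 \<le> i \<and> 1 \<le> j \<and> j \<le> row la (i - 1)"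
  unfolding mem_boxes_iff row_def using young_pos[of la "i - 1"] by auto

lemma boxes_eq_Sigma: "boxes la = (\<lambda>(i, j). (i + 1, j)) ` (SIGMA i:{..<length la}. {1..la ! i})"
  unfolding boxes_def by (force simp: image_iff)

lemma finite_boxes [simp]: "finite (boxes la)"
  unfolding boxes_eq_Sigma by auto

lemma card_boxes: "card (boxes la) = ysize la"
proof -
  have "inj_on (\<lambda>(i::nat, j::nat). (i + 1, j)) X" for X by (auto simp: inj_on_def)
  then have "card (boxes la) = card (SIGMA i:{..<length la}. {1..la ! i})"
    unfolding boxes_eq_Sigma by (simp add: card_image)
  also have "\<dots> = (\<Sum>i<length la. la ! i)" by simp
  also have "\<dots> = ysize la" by (simp add: ysize_def sum_list_sum_nth atLeast0LessThan)
  finally show ?thesis .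
qed

lemma boxes_downward_closed:
  "young la \<Longrightarrow> (i, j) \<in> boxes la \<Longrightarrow> 1 \<le> i' \<Longrightarrow> i' \<le> i \<Longrightarrow> 1 \<le> j' \<Longrightarrow> j' \<le> j
   \<Longrightarrow> (i', j') \<in> boxes la"
  using row_antimono[of la "i' - 1" "i - 1"] by (force simp: mem_boxes_iff_row)

lemma young_length_iff_box: "young la \<Longrightarrow> i < length la \<longleftrightarrow> (i + 1, 1) \<in> boxes la"
  unfolding mem_boxes_iff using young_pos[of la i] by auto

lemma young_eqI_boxes:
  assumes la: "young la" and mu: "young mu" and eq: "boxes la = boxes mu"
  shows "la = mu"
proof (rule nth_equalityI)
  show len: "length la = length mu"
    using young_length_iff_box[OF la] young_length_iff_box[OF mu] eq by (metis linorder_neqE_nat less_irrefl)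
  fix i assume i: "i < length la"
  have "(i + 1, la ! i) \<in> boxes la" "(i + 1, mu ! i) \<in> boxes mu"
    using young_pos[OF la i] young_pos[OF mu, of i] i len by (auto simp: mem_boxes_iff)
  then have "(i + 1, la ! i) \<in> boxes mu" "(i + 1, mu ! i) \<in> boxes la"
    using eq by simp_all
  then show "la ! i = mu ! i" by (auto simp: mem_boxes_iff)
qed

definition ymeet :: "nat list \<Rightarrow> nat list \<Rightarrow> nat list" where
  "ymeet la mu = map (\<lambda>i. min (la ! i) (mu ! i)) [0..<min (length la) (length mu)]"

definition yjoin :: "nat list \<Rightarrow> nat list \<Rightarrow> nat list" where
  "yjoin la mu = map (\<lambda>i. max (row la i) (row mu i)) [0..<max (length la) (length mu)]"

lemma length_ymeet [simp]: "length (ymeet la mu) = min (length la) (length mu)"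
  by (simp add: ymeet_def)

lemma length_yjoin [simp]: "length (yjoin la mu) = max (length la) (length mu)"
  by (simp add: yjoin_def)

lemma row_ymeet: "row (ymeet la mu) k = min (row la k) (row mu k)"
  by (simp add: row_def ymeet_def)

lemma row_yjoin: "row (yjoin la mu) k = max (row la k) (row mu k)"
  by (auto simp: row_def yjoin_def max_def)

lemma young_ymeet: "young la \<Longrightarrow> young mu \<Longrightarrow> young (ymeet la mu)"
  unfolding young_iff_row row_ymeet by (metis min.mono min_less_iff_conj length_ymeet)

lemma young_yjoin: "young la \<Longrightarrow> young mu \<Longrightarrow> young (yjoin la mu)"
  unfolding young_iff_row row_yjoin by (metis max.mono less_max_iff_disj length_yjoin)

lemma boxes_ymeet: "young la \<Longrightarrow> young mu \<Longrightarrow> boxes (ymeet la mu) = boxes la \<inter> boxes mu"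
  using young_ymeet by (auto simp: mem_boxes_iff_row row_ymeet)

lemma boxes_yjoin: "young la \<Longrightarrow> young mu \<Longrightarrow> boxes (yjoin la mu) = boxes la \<union> boxes mu"
  using young_yjoin by (auto simp: mem_boxes_iff_row row_yjoin le_max_iff_disj)

section \<open>Covering relation and corners\<close>

lemma nearrow_iff_card:
  "nearrow mu la \<longleftrightarrow> young mu \<and> young la \<and> boxes mu \<subseteq> boxes la \<and> card (boxes la) = card (boxes mu) + 1"
  unfolding nearrow_def card_boxes by simp

lemma nearrowE_insert:
  assumes "nearrow mu la"
  obtains b where "b \<notin> boxes mu" "boxes la = insert b (boxes mu)"
proof -
  from assms have sub: "boxes mu \<subseteq> boxes la" and "card (boxes la) = card (boxes mu) + 1"
    by (auto simp: nearrow_iff_card)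
  then have "card (boxes la - boxes mu) = 1" by (simp add: card_Diff_subset)
  then obtain b where "boxes la - boxes mu = {b}" by (auto simp: card_Suc_eq)
  then show ?thesis using that sub by blast
qed

lemma finite_YD: "finite (YD n)"
proof (rule finite_subset)
  show "YD n \<subseteq> {xs. set xs \<subseteq> {..n} \<and> length xs \<le> n}"
  proof
    fix xs assume "xs \<in> YD n"
    then have y: "young xs" and s: "sum_list xs = n" by (auto simp: YD_def ysize_def)
    have "set xs \<subseteq> {..n}" using s member_le_sum_list by fastforce
    moreover have "length xs \<le> sum_list xs"
      using y unfolding young_def by (induction xs) auto
    ultimately show "xs \<in> {xs. set xs \<subseteq> {..n} \<and> length xs \<le> n}" using s by simp
  qed
  show "finite {xs. set xs \<subseteq> {..n} \<and> length xs \<le> n}" by (intro finite_lists_length_le) auto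
qed

lemma finite_nearrow_above: "finite {nu. nearrow la nu}"
  by (rule finite_subset[OF _ finite_YD[of "ysize la + 1"]]) (auto simp: nearrow_def YD_def)

lemma finite_nearrow_below: "finite {mu. nearrow mu la}"
  by (rule finite_subset[OF _ finite_YD[of "ysize la - 1"]]) (auto simp: nearrow_def YD_def)

text \<open>Rows of the list are indexed from \<open>0\<close>, while boxes \<open>(i, j)\<close> use \<open>1\<close>-based rows: the box
  added to row \<open>i\<close> is \<open>(i + 1, row la i + 1)\<close>.\<close>

definition addable_rows :: "nat list \<Rightarrow> nat set" where
  "addable_rows la = {i. i \<le> length la \<and> (i = 0 \<or> row la i < row la (i - 1))}"

definition removable_rows :: "nat list \<Rightarrow> nat set" where
  "removable_rows la = {i. i < length la \<and> row la (i + 1) < la ! i}"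

definition add_box :: "nat list \<Rightarrow> nat \<Rightarrow> nat list" where
  "add_box la i = (if i < length la then la[i := la ! i + 1] else la @ [1])"

definition remove_box :: "nat list \<Rightarrow> nat \<Rightarrow> nat list" where
  "remove_box la i = (if la ! i = 1 then take i la else la[i := la ! i - 1])"

lemma row_add_box: "i \<le> length la \<Longrightarrow> row (add_box la i) k = (if k = i then row la i + 1 else row la k)"
  unfolding add_box_def row_def by (auto simp: nth_append)

lemma young_add_box:
  assumes y: "young la" and i: "i \<in> addable_rows la"
  shows "young (add_box la i)"
proof -
  have il: "i \<le> length la" using i by (simp add: addable_rows_def)
  have pos: "\<forall>k<length la. 0 < row la k" and mono: "\<forall>k. row la (Suc k) \<le> row la k"
    using y by (auto simp: young_iff_row)
  show ?thesis unfolding young_iff_row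
  proof (intro conjI allI impI)
    fix k assume "k < length (add_box la i)"
    moreover have "length (add_box la i) = (if i < length la then length la else length la + 1)"
      using il by (simp add: add_box_def)
    ultimately show "0 < row (add_box la i) k"
      using pos il by (auto simp: row_add_box split: if_splits)
  next
    fix k
    show "row (add_box la i) (Suc k) \<le> row (add_box la i) k"
      using mono[rule_format, of k] i il by (auto simp: row_add_box addable_rows_def)
  qed
qed

lemma boxes_add_box:
  assumes y: "young la" and i: "i \<in> addable_rows la"
  shows "boxes (add_box la i) = insert (i + 1, row la i + 1) (boxes la)"
proof -
  have il: "i \<le> length la" using i by (simp add: addable_rows_def)
  have "x \<in> boxes (add_box la i) \<longleftrightarrow> x \<in> insert (i + 1, row la i + 1) (boxes la)" for x
    by (cases x) (auto simp: mem_boxes_iff_row[OF young_add_box[OF y i]] mem_boxes_iff_row[OF y]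
        row_add_box[OF il])
  then show ?thesis by blast
qed

lemma row_remove_box:
  assumes y: "young la" and i: "i \<in> removable_rows la"
  shows "row (remove_box la i) k = (if k = i then la ! i - 1 else row la k)"
proof -
  have il: "i < length la" and g: "row la (i + 1) < la ! i" using i by (auto simp: removable_rows_def)
  show ?thesis
  proof (cases "la ! i = 1")
    case True
    then have "row la (i + 1) = 0" using g by simp
    then have "length la = i + 1" using young_pos[OF y, of "i + 1"] il by (auto simp: row_def split: if_splits)
    then show ?thesis using True il unfolding remove_box_def row_def by auto
  next
    case False
    then show ?thesis using il unfolding remove_box_def row_def by auto
  qed
qed

lemma young_remove_box:
  assumes y: "young la" and i: "i \<in> removable_rows la"
  shows "young (remove_box la i)"
proof -
  have il: "i < length la" and g: "row la (i + 1) < la ! i" using i by (auto simp: removable_rows_def)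
  have pos: "0 < row (remove_box la i) k" if "k < length (remove_box la i)" for k
    using that young_pos[OF y, of k] il
    by (cases "la ! i = 1") (auto simp: remove_box_def row_def nth_list_update)
  have mono: "row la (Suc k) \<le> row la k" for k using y by (simp add: young_iff_row)
  have "row la i = la ! i" using il by (simp add: row_def)
  then have "row (remove_box la i) (Suc k) \<le> row (remove_box la i) k" for k
    using mono[of k] g unfolding row_remove_box[OF y i] by auto
  with pos show ?thesis unfolding young_iff_row by blast
qed

lemma boxes_remove_box:
  assumes y: "young la" and i: "i \<in> removable_rows la"
  shows "boxes la = insert (i + 1, la ! i) (boxes (remove_box la i))"
    and "(i + 1, la ! i) \<notin> boxes (remove_box la i)"
proof -
  have il: "i < length la" using i by (simp add: removable_rows_def)
  have p: "0 < la ! i" and ri: "row la i = la ! i" using young_pos[OF y il] il by (simp_all add: row_def)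
  note y' = young_remove_box[OF y i]
  have "x \<in> boxes la \<longleftrightarrow> x \<in> insert (i + 1, la ! i) (boxes (remove_box la i))" for x
    using p ri by (cases x) (auto simp: mem_boxes_iff_row[OF y'] mem_boxes_iff_row[OF y] row_remove_box[OF y i])
  then show "boxes la = insert (i + 1, la ! i) (boxes (remove_box la i))" by blast
  show "(i + 1, la ! i) \<notin> boxes (remove_box la i)"
    using p by (simp add: mem_boxes_iff_row[OF y'] row_remove_box[OF y i])
qed

lemma nearrow_add_box: "young la \<Longrightarrow> i \<in> addable_rows la \<Longrightarrow> nearrow la (add_box la i)"
  unfolding nearrow_iff_card using boxes_add_box young_add_box by (auto simp: mem_boxes_iff_row)

lemma nearrow_remove_box: "young la \<Longrightarrow> i \<in> removable_rows la \<Longrightarrow> nearrow (remove_box la i) la"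
  unfolding nearrow_iff_card using boxes_remove_box young_remove_box by auto

lemma nearrow_imp_add_box:
  assumes y: "young la" and n: "nearrow la nu"
  shows "\<exists>i\<in>addable_rows la. nu = add_box la i"
proof -
  obtain b where b: "b \<notin> boxes la" "boxes nu = insert b (boxes la)" using nearrowE_insert[OF n] .
  obtain p q where pq: "b = (p, q)" by (cases b)
  have yn: "young nu" using n by (simp add: nearrow_def)
  have bn: "(p, q) \<in> boxes nu" using b pq by auto
  then have p1: "1 \<le> p" and q1: "1 \<le> q" by (auto simp: mem_boxes_iff_row[OF yn])
  define i where "i = p - 1"
  have p: "p = i + 1" using p1 i_def by simp
  have "row la i < q" using b pq p q1 by (simp add: mem_boxes_iff_row[OF y])
  moreover have "q - 1 \<le> row la i"
  proof (cases "q \<ge> 2")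
    case True
    then have "(p, q - 1) \<in> boxes nu" using boxes_downward_closed[OF yn bn] p1 by simp
    then have "(p, q - 1) \<in> boxes la" using b pq True by auto
    then show ?thesis by (simp add: mem_boxes_iff_row[OF y] p)
  qed (use q1 in simp)
  ultimately have q: "q = row la i + 1" by simp
  have il: "i \<le> length la"
  proof (rule ccontr)
    assume "\<not> i \<le> length la"
    then have "(length la + 1, 1) \<in> boxes nu" "(length la + 1, 1) \<noteq> b"
      using boxes_downward_closed[OF yn bn, of "length la + 1" 1] p q1 pq by auto
    moreover have "(length la + 1, 1) \<notin> boxes la" by (simp add: mem_boxes_iff_row[OF y] row_beyond)
    ultimately show False using b by auto
  qed
  have iA: "i \<in> addable_rows la"
  proof (cases "i = 0")
    case False
    then have "(p - 1, q) \<in> boxes nu" using boxes_downward_closed[OF yn bn, of "p - 1" q] p q1 by simp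
    then have "(p - 1, q) \<in> boxes la" using b pq p by auto
    then have "q \<le> row la (i - 1)" using p by (simp add: mem_boxes_iff_row[OF y])
    then show ?thesis using il q by (simp add: addable_rows_def)
  qed (simp add: addable_rows_def)
  have "boxes nu = boxes (add_box la i)" using b pq p q boxes_add_box[OF y iA] by simp
  then show ?thesis using young_eqI_boxes[OF yn young_add_box[OF y iA]] iA by blast
qed

lemma nearrow_imp_remove_box:
  assumes y: "young la" and n: "nearrow rho la"
  shows "\<exists>i\<in>removable_rows la. rho = remove_box la i"
proof -
  obtain b where b: "b \<notin> boxes rho" "boxes la = insert b (boxes rho)" using nearrowE_insert[OF n] .
  obtain p q where pq: "b = (p, q)" by (cases b)
  have yr: "young rho" using n by (simp add: nearrow_def)
  have "(p, q) \<in> boxes la" using b pq by auto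
  then have p1: "1 \<le> p" and q1: "1 \<le> q" and qle: "q \<le> row la (p - 1)" by (auto simp: mem_boxes_iff_row[OF y])
  define i where "i = p - 1"
  have p: "p = i + 1" using p1 i_def by simp
  have il: "i < length la" using qle q1 p by (auto simp: row_def split: if_splits)
  have not_in_rho: "(p', q') \<notin> boxes rho" if "p \<le> p'" "q \<le> q'" for p' q'
    using boxes_downward_closed[OF yr, of p' q' p q] that p1 q1 b pq by auto
  have q: "q = la ! i"
  proof (rule ccontr)
    assume "q \<noteq> la ! i"
    then have "(p, q + 1) \<in> boxes la" using qle il p q1 by (simp add: mem_boxes_iff_row[OF y] row_def)
    then show False using b pq not_in_rho[of p "q + 1"] by auto
  qed
  have "row la (i + 1) < la ! i"
  proof (rule ccontr)
    assume "\<not> row la (i + 1) < la ! i"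
    then have "(p + 1, q) \<in> boxes la" using q q1 p by (simp add: mem_boxes_iff_row[OF y])
    then show False using b pq not_in_rho[of "p + 1" q] by auto
  qed
  then have iR: "i \<in> removable_rows la" using il by (simp add: removable_rows_def)
  have "boxes rho = boxes (remove_box la i)"
    using b pq p q boxes_remove_box[OF y iR] by (metis insert_ident)
  then show ?thesis using young_eqI_boxes[OF yr young_remove_box[OF y iR]] iR by blast
qed

lemma nearrow_above_eq: "young la \<Longrightarrow> {nu. nearrow la nu} = add_box la ` addable_rows la"
  using nearrow_imp_add_box nearrow_add_box by blast

lemma nearrow_below_eq: "young la \<Longrightarrow> {rho. nearrow rho la} = remove_box la ` removable_rows la"
  using nearrow_imp_remove_box nearrow_remove_box by blast

lemma added_box: "young la \<Longrightarrow> i \<in> addable_rows la \<Longrightarrow> boxes (add_box la i) - boxes la = {(i + 1, row la i + 1)}"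
  using boxes_add_box by (auto simp: mem_boxes_iff_row)

lemma removed_box: "young la \<Longrightarrow> i \<in> removable_rows la \<Longrightarrow> boxes la - boxes (remove_box la i) = {(i + 1, la ! i)}"
  using boxes_remove_box by blast

lemma inj_on_add_box: "young la \<Longrightarrow> inj_on (add_box la) (addable_rows la)"
  by (rule inj_onI) (metis added_box prod.inject singleton_inject add_right_cancel)

lemma inj_on_remove_box: "young la \<Longrightarrow> inj_on (remove_box la) (removable_rows la)"
  by (rule inj_onI) (metis removed_box prod.inject singleton_inject add_right_cancel)

lemma sum_nearrow_above:
  "young la \<Longrightarrow> (\<Sum>nu | nearrow la nu. f (boxes nu - boxes la)) = (\<Sum>i\<in>addable_rows la. f {(i + 1, row la i + 1)})"
  by (simp add: nearrow_above_eq sum.reindex inj_on_add_box added_box)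

lemma sum_nearrow_below:
  "young la \<Longrightarrow> (\<Sum>rho | nearrow rho la. f (boxes la - boxes rho)) = (\<Sum>i\<in>removable_rows la. f {(i + 1, la ! i)})"
  by (simp add: nearrow_below_eq sum.reindex inj_on_remove_box removed_box)

section \<open>Chains and the branching rule\<close>

lemma ysize_chain_nth:
  assumes "xs \<in> chains mu la" "i < length xs"
  shows "ysize (xs ! i) = ysize mu + i"
  using assms(2)
proof (induction i)
  case 0
  then show ?case using assms(1) by (auto simp: chains_def hd_conv_nth)
next
  case (Suc i)
  then have "nearrow (xs ! i) (xs ! (i + 1))" using assms(1) by (auto simp: chains_def)
  then show ?case using Suc by (auto simp: nearrow_def)
qed

lemma length_chain: "xs \<in> chains mu la \<Longrightarrow> ysize la = ysize mu + (length xs - 1)"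
  using ysize_chain_nth[of xs mu la "length xs - 1"] by (auto simp: chains_def last_conv_nth)

lemma chains_refl: "young mu \<Longrightarrow> chains mu mu = {[mu]}"
proof safe
  fix xs assume xs: "xs \<in> chains mu mu"
  then have "length xs = 1" using length_chain[OF xs] by (cases xs) (auto simp: chains_def)
  then show "xs = [mu]" using xs by (cases xs) (auto simp: chains_def)
qed (auto simp: chains_def)

lemma dimrel_refl: "young mu \<Longrightarrow> dimrel mu mu = 1"
  by (simp add: dimrel_def chains_refl)

lemma dimrel_eq_0: "ysize la \<le> ysize mu \<Longrightarrow> la \<noteq> mu \<Longrightarrow> dimrel mu la = 0"
proof -
  assume "ysize la \<le> ysize mu" "la \<noteq> mu"
  have "xs \<notin> chains mu la" for xs
  proof
    assume xs: "xs \<in> chains mu la"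
    then have "length xs = 1"
      using length_chain[OF xs] \<open>ysize la \<le> ysize mu\<close> by (cases xs) (auto simp: chains_def)
    then show False using xs \<open>la \<noteq> mu\<close> by (cases xs) (auto simp: chains_def)
  qed
  then have "chains mu la = {}" by blast
  then show ?thesis by (simp add: dimrel_def)
qed

lemma dimrel_same_size: "young mu \<Longrightarrow> ysize la = ysize mu \<Longrightarrow> dimrel mu la = of_bool (la = mu)"
  using dimrel_refl dimrel_eq_0 by auto

lemma finite_chains: "finite (chains mu la)"
proof (rule finite_subset)
  let ?A = "\<Union>k\<le>ysize la. YD k"
  show "chains mu la \<subseteq> {xs. set xs \<subseteq> ?A \<and> length xs \<le> ysize la + 1}"
  proof safe
    fix xs x assume xs: "xs \<in> chains mu la" and "x \<in> set xs"
    then obtain i where "i < length xs" "x = xs ! i" by (auto simp: in_set_conv_nth)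
    then show "x \<in> ?A"
      using ysize_chain_nth[OF xs, of i] length_chain[OF xs] xs by (auto simp: chains_def YD_def)
  next
    fix xs assume "xs \<in> chains mu la"
    then show "length xs \<le> ysize la + 1" using length_chain by fastforce
  qed
  show "finite {xs. set xs \<subseteq> ?A \<and> length xs \<le> ysize la + 1}"
    by (intro finite_lists_length_le) (auto simp: finite_YD)
qed

lemma snoc_in_chains_iff:
  assumes "ys \<noteq> []"
  shows "ys @ [la] \<in> chains mu la \<longleftrightarrow> young la \<and> ys \<in> chains mu (last ys) \<and> nearrow (last ys) la"
proof -
  have split: "(\<forall>i. i + 1 < length ys + 1 \<longrightarrow> P i) \<longleftrightarrow> (\<forall>i. i + 1 < length ys \<longrightarrow> P i) \<and> P (length ys - 1)"
    for P
  proof -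
    have *: "i + 1 < length ys + 1 \<longleftrightarrow> i + 1 < length ys \<or> i = length ys - 1" for i
      using assms by (cases ys) auto
    then show ?thesis by (auto simp only: *)
  qed
  have "(ys @ [la]) ! (length ys - 1) = last ys" using assms by (simp add: nth_append last_conv_nth)
  then show ?thesis
    unfolding chains_def using assms split[of "\<lambda>i. nearrow ((ys @ [la]) ! i) ((ys @ [la]) ! (i + 1))"]
    by (auto simp: nth_append)
qed

lemma chains_snoc_eq:
  assumes "young la" "ysize mu < ysize la"
  shows "chains mu la = (\<lambda>xs. xs @ [la]) ` (\<Union>rho\<in>{rho. nearrow rho la}. chains mu rho)"
proof safe
  fix xs assume xs: "xs \<in> chains mu la"
  define ys where "ys = butlast xs"
  have "2 \<le> length xs" using length_chain[OF xs] assms(2) by linarith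
  then have "ys \<noteq> []" unfolding ys_def by (cases xs rule: rev_cases) auto
  moreover have xs_eq: "xs = ys @ [la]" using xs unfolding ys_def chains_def by (auto intro: append_butlast_last_id[symmetric])
  ultimately have "ys \<in> chains mu (last ys)" "nearrow (last ys) la"
    using snoc_in_chains_iff xs by blast+
  then show "xs \<in> (\<lambda>xs. xs @ [la]) ` (\<Union>rho\<in>{rho. nearrow rho la}. chains mu rho)"
    using xs_eq by blast
next
  fix rho ys assume "nearrow rho la" "ys \<in> chains mu rho"
  moreover have "ys \<noteq> []" "last ys = rho" using \<open>ys \<in> chains mu rho\<close> by (auto simp: chains_def)
  ultimately show "ys @ [la] \<in> chains mu la" using assms(1) snoc_in_chains_iff by blast
qed

lemma dimrel_branching:
  assumes "young la" "ysize mu < ysize la"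
  shows "dimrel mu la = (\<Sum>rho | nearrow rho la. dimrel mu rho)"
proof -
  have "dimrel mu la = card (\<Union>rho\<in>{rho. nearrow rho la}. chains mu rho)"
    unfolding dimrel_def chains_snoc_eq[OF assms] by (rule card_image) (auto simp: inj_on_def)
  also have "\<dots> = (\<Sum>rho | nearrow rho la. card (chains mu rho))"
    by (rule card_UN_disjoint) (use finite_nearrow_below finite_chains in \<open>auto simp: chains_def\<close>)
  finally show ?thesis by (simp add: dimrel_def)
qed

lemma ydim_pos: "young la \<Longrightarrow> 0 < ydim la"
proof (induction "ysize la" arbitrary: la rule: less_induct)
  case less
  show ?case
  proof (cases "la = []")
    case True
    then show ?thesis using dimrel_refl by (simp add: ydim_def young_def)
  next
    case False
    define i where "i = length la - 1"
    have "i \<in> removable_rows la"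
      using young_pos[OF less.prems, of i] False by (simp add: i_def removable_rows_def row_beyond)
    then have n: "nearrow (remove_box la i) la" by (rule nearrow_remove_box[OF less.prems])
    then have "0 < ydim (remove_box la i)" using less.hyps by (simp add: nearrow_def)
    also have "ydim (remove_box la i) \<le> (\<Sum>rho | nearrow rho la. ydim rho)"
      by (rule member_le_sum) (use n finite_nearrow_below in auto)
    also have "\<dots> = ydim la"
      unfolding ydim_def using n by (intro dimrel_branching[symmetric] less.prems) (simp add: nearrow_def ysize_def)
    finally show ?thesis .
  qed
qed

section \<open>The content identity\<close>

text \<open>A row \<open>i + 1\<close> that is not addable has the same length as row \<open>i\<close>, so that row \<open>i\<close>
  is not removable, and the would-be box of row \<open>i + 1\<close> has the content of the last box of
  row \<open>i\<close> minus one; hence both sums telescope row by row.\<close>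

lemma addable_removable_telescope:
  fixes W :: "int \<Rightarrow> 'a::ab_group_add"
  assumes y: "young la"
  shows "(\<Sum>i\<in>addable_rows la. W (int (row la i) - int i))
           - (\<Sum>i\<in>removable_rows la. W (int (la ! i) - int i - 1))
       = W (- int (length la)) + (\<Sum>i<length la. W (int (la ! i) - int i) - W (int (la ! i) - int i - 1))"
proof -
  let ?l = "length la"
  have mono: "row la (Suc k) \<le> row la k" for k using y by (auto simp: young_iff_row)
  define NR where "NR = {..<?l} - removable_rows la"
  define NA where "NA = {..?l} - addable_rows la"
  have NR_eq: "NR = {j. j < ?l \<and> row la (Suc j) = row la j}"
  proof (rule set_eqI)
    fix j
    show "j \<in> NR \<longleftrightarrow> j \<in> {j. j < ?l \<and> row la (Suc j) = row la j}"
      using mono[of j] by (cases "j < ?l") (auto simp: NR_def removable_rows_def row_def)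
  qed
  have NA_eq: "NA = Suc ` NR"
  proof
    show "NA \<subseteq> Suc ` NR"
    proof
      fix i assume "i \<in> NA"
      then have i: "i \<le> ?l" "i \<noteq> 0" "\<not> row la i < row la (i - 1)"
        by (auto simp: NA_def addable_rows_def)
      then obtain j where "i = Suc j" by (cases i) auto
      then show "i \<in> Suc ` NR" unfolding NR_eq using i mono[of j] by auto
    qed
    show "Suc ` NR \<subseteq> NA" unfolding NR_eq NA_def addable_rows_def by auto
  qed
  have sum_A: "(\<Sum>i\<le>?l. W (int (row la i) - int i))
      = (\<Sum>i\<in>addable_rows la. W (int (row la i) - int i)) + (\<Sum>i\<in>NA. W (int (row la i) - int i))"
    unfolding NA_def by (subst sum.subset_diff[of "addable_rows la"]) (auto simp: addable_rows_def)
  have sum_R: "(\<Sum>i<?l. W (int (la ! i) - int i - 1))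
      = (\<Sum>i\<in>removable_rows la. W (int (la ! i) - int i - 1)) + (\<Sum>i\<in>NR. W (int (la ! i) - int i - 1))"
    unfolding NR_def by (subst sum.subset_diff[of "removable_rows la"]) (auto simp: removable_rows_def)
  have "(\<Sum>i\<in>NA. W (int (row la i) - int i)) = (\<Sum>j\<in>NR. W (int (row la (Suc j)) - int (Suc j)))"
    unfolding NA_eq by (rule sum.reindex[unfolded comp_def]) simp
  also have "\<dots> = (\<Sum>j\<in>NR. W (int (la ! j) - int j - 1))"
    by (rule sum.cong) (auto simp: NR_eq row_def algebra_simps)
  finally have sum_N: "(\<Sum>i\<in>NA. W (int (row la i) - int i)) = (\<Sum>j\<in>NR. W (int (la ! j) - int j - 1))" .
  have "(\<Sum>i\<le>?l. W (int (row la i) - int i)) = (\<Sum>i<?l. W (int (row la i) - int i)) + W (- int ?l)"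
    by (simp add: lessThan_Suc_atMost[symmetric] row_beyond)
  also have "(\<Sum>i<?l. W (int (row la i) - int i)) = (\<Sum>i<?l. W (int (la ! i) - int i))"
    by (rule sum.cong) (auto simp: row_def)
  finally show ?thesis using sum_A sum_R sum_N by (simp add: sum_subtractf algebra_simps)
qed

lemma sum_odd_numbers: "(\<Sum>i<l. 2 * of_nat i + 1 :: 'a::comm_semiring_1) = of_nat l ^ 2"
  by (induction l) (auto simp: power2_eq_square algebra_simps mult_2_right)

definition box_weight :: "complex \<Rightarrow> complex \<Rightarrow> (nat \<times> nat) set \<Rightarrow> complex" where
  "box_weight z z' S = cprod z S * cprod z' S"

lemma content_identity:
  assumes y: "young la"
  shows "(\<Sum>nu | nearrow la nu. box_weight z z' (boxes nu - boxes la))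
       - (\<Sum>rho | nearrow rho la. box_weight z z' (boxes la - boxes rho)) = z * z' + 2 * of_nat (ysize la)"
proof -
  define W where "W c = (z + of_int c) * (z' + of_int c)" for c :: int
  let ?l = "length la"
  have W_box: "box_weight z z' {(a, b)} = W (int b - int a)" for a b
    by (simp add: box_weight_def cprod_def W_def)
  have W_diff: "W c - W (c - 1) = z + z' + 2 * of_int c - 1" for c
    unfolding W_def by (simp add: algebra_simps)
  have "(\<Sum>i<?l. W (int (la ! i) - int i) - W (int (la ! i) - int i - 1))
      = (\<Sum>i<?l. (z + z') + 2 * of_nat (la ! i) - (2 * of_nat i + 1))"
    unfolding W_diff by (simp add: algebra_simps)
  also have "\<dots> = of_nat ?l * (z + z') + 2 * (\<Sum>i<?l. of_nat (la ! i)) - of_nat ?l ^ 2"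
    by (simp add: sum_subtractf sum.distrib sum_distrib_left sum_odd_numbers[where 'a = complex, symmetric])
  also have "(\<Sum>i<?l. of_nat (la ! i) :: complex) = of_nat (ysize la)"
    unfolding ysize_def sum_list_sum_nth atLeast0LessThan by simp
  finally have steps: "(\<Sum>i<?l. W (int (la ! i) - int i) - W (int (la ! i) - int i - 1))
      = of_nat ?l * (z + z') + 2 * of_nat (ysize la) - of_nat ?l ^ 2" .
  have last: "W (- int ?l) = z * z' - of_nat ?l * (z + z') + of_nat ?l ^ 2"
    unfolding W_def by (simp add: algebra_simps power2_eq_square)
  have above: "(\<Sum>nu | nearrow la nu. box_weight z z' (boxes nu - boxes la))
      = (\<Sum>i\<in>addable_rows la. W (int (row la i) - int i))"
    unfolding sum_nearrow_above[OF y] W_box by simp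
  have below: "(\<Sum>rho | nearrow rho la. box_weight z z' (boxes la - boxes rho))
      = (\<Sum>i\<in>removable_rows la. W (int (la ! i) - int i - 1))"
    unfolding sum_nearrow_below[OF y] W_box by (simp add: algebra_simps)
  show ?thesis
    unfolding above below addable_removable_telescope[OF y] steps last by (simp add: algebra_simps)
qed

section \<open>Swapping two-step paths\<close>

lemma card_Un_Int_of_distinct:
  assumes "finite A" "finite B" "card A = card B" "A \<noteq> B"
  shows "card (A \<union> B) = card A + card B - card (A \<inter> B)" "card (A \<inter> B) < card A"
proof -
  show "card (A \<union> B) = card A + card B - card (A \<inter> B)"
    using card_Un_Int[OF assms(1,2)] by simp
  have "A \<inter> B \<noteq> A" using assms card_subset_eq[OF assms(2)] by (metis Int_lower2 inf.absorb_iff1)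
  then show "card (A \<inter> B) < card A" using assms(1) by (meson Int_lower1 psubsetI psubset_card_mono)
qed

lemma nearrow_common_above:
  assumes la: "nearrow la nu" and rho: "nearrow rho nu" and "rho \<noteq> la"
  shows "boxes nu = boxes rho \<union> boxes la" "nearrow (ymeet rho la) la" "nearrow (ymeet rho la) rho"
proof -
  have y: "young la" "young rho" using la rho by (auto simp: nearrow_def)
  have card: "card (boxes la) = card (boxes rho)" "card (boxes nu) = card (boxes la) + 1"
    using la rho by (auto simp: nearrow_iff_card)
  have "boxes rho \<noteq> boxes la" using young_eqI_boxes y \<open>rho \<noteq> la\<close> by metis
  note distinct = card_Un_Int_of_distinct[OF finite_boxes finite_boxes card(1)[symmetric] this]
  have "boxes rho \<union> boxes la \<subseteq> boxes nu" using la rho by (auto simp: nearrow_def)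
  then show U: "boxes nu = boxes rho \<union> boxes la"
    using distinct card by (intro card_seteq[symmetric]) auto
  then have "card (boxes rho \<inter> boxes la) + 1 = card (boxes la)"
    using distinct card by simp
  then show "nearrow (ymeet rho la) la" "nearrow (ymeet rho la) rho"
    unfolding nearrow_iff_card boxes_ymeet[OF y(2,1)] using young_ymeet[OF y(2,1)] y card by auto
qed

lemma nearrow_common_below:
  assumes la: "nearrow tau la" and rho: "nearrow tau rho" and "rho \<noteq> la"
  shows "boxes tau = boxes rho \<inter> boxes la" "nearrow la (yjoin rho la)" "nearrow rho (yjoin rho la)"
proof -
  have y: "young la" "young rho" using la rho by (auto simp: nearrow_def)
  have card: "card (boxes la) = card (boxes rho)" "card (boxes la) = card (boxes tau) + 1"
    using la rho by (auto simp: nearrow_iff_card)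
  have "boxes rho \<noteq> boxes la" using young_eqI_boxes y \<open>rho \<noteq> la\<close> by metis
  note distinct = card_Un_Int_of_distinct[OF finite_boxes finite_boxes card(1)[symmetric] this]
  have "boxes tau \<subseteq> boxes rho \<inter> boxes la" using la rho by (auto simp: nearrow_def)
  then show I: "boxes tau = boxes rho \<inter> boxes la"
    using distinct card by (intro card_seteq) auto
  then have "card (boxes rho \<union> boxes la) = card (boxes la) + 1"
    using distinct card by simp
  then show "nearrow la (yjoin rho la)" "nearrow rho (yjoin rho la)"
    unfolding nearrow_iff_card boxes_yjoin[OF y(2,1)] using young_yjoin[OF y(2,1)] y card by auto
qed

text \<open>The paths \<open>la \<nearrow> nu \<searrow> rho\<close> and \<open>la \<searrow> tau \<nearrow> rho\<close> with \<open>rho \<noteq> la\<close> are in bijection via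
  \<open>tau = la \<inter> rho\<close>, \<open>nu = la \<union> rho\<close>, and the box \<open>nu / la\<close> equals the box \<open>rho / tau\<close>.\<close>

lemma sum_swap_two_step_paths:
  assumes y: "young la"
  shows "(\<Sum>nu | nearrow la nu. \<Sum>rho | nearrow rho nu \<and> rho \<noteq> la. F (boxes nu - boxes la) rho)
       = (\<Sum>tau | nearrow tau la. \<Sum>rho | nearrow tau rho \<and> rho \<noteq> la. F (boxes rho - boxes tau) rho)"
proof -
  let ?P1 = "SIGMA nu:{nu. nearrow la nu}. {rho. nearrow rho nu \<and> rho \<noteq> la}"
  let ?P2 = "SIGMA tau:{tau. nearrow tau la}. {rho. nearrow tau rho \<and> rho \<noteq> la}"
  have fin: "finite {rho. nearrow rho nu \<and> rho \<noteq> la}" "finite {rho. nearrow tau rho \<and> rho \<noteq> la}" for nu tau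
    using finite_nearrow_below[of nu] finite_nearrow_above[of tau] by (auto elim: finite_subset[rotated])
  have "(\<Sum>nu | nearrow la nu. \<Sum>rho | nearrow rho nu \<and> rho \<noteq> la. F (boxes nu - boxes la) rho)
      = (\<Sum>(nu, rho)\<in>?P1. F (boxes nu - boxes la) rho)"
    by (rule sum.Sigma) (auto simp: finite_nearrow_above fin)
  also have "\<dots> = (\<Sum>(tau, rho)\<in>?P2. F (boxes rho - boxes tau) rho)"
  proof (rule sum.reindex_bij_witness[where j = "\<lambda>(nu, rho). (ymeet rho la, rho)"
        and i = "\<lambda>(tau, rho). (yjoin rho la, rho)"])
    fix a assume "a \<in> ?P1"
    then obtain nu rho where a: "a = (nu, rho)" and n: "nearrow la nu" "nearrow rho nu" "rho \<noteq> la" by auto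
    note D = nearrow_common_above[OF n]
    have yr: "young rho" "young nu" using n by (auto simp: nearrow_def)
    have "yjoin rho la = nu" using young_eqI_boxes[OF young_yjoin[OF yr(1) y] yr(2)] boxes_yjoin[OF yr(1) y] D(1) by simp
    then show "(\<lambda>(tau, rho). (yjoin rho la, rho)) ((\<lambda>(nu, rho). (ymeet rho la, rho)) a) = a" using a by simp
    show "(\<lambda>(nu, rho). (ymeet rho la, rho)) a \<in> ?P2" using a D(2,3) n(3) by simp
    have "boxes rho - boxes (ymeet rho la) = boxes nu - boxes la"
      unfolding boxes_ymeet[OF yr(1) y] D(1) by blast
    then show "(\<lambda>(tau, rho). F (boxes rho - boxes tau) rho) ((\<lambda>(nu, rho). (ymeet rho la, rho)) a)
        = (\<lambda>(nu, rho). F (boxes nu - boxes la) rho) a" using a by simp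
  next
    fix b assume "b \<in> ?P2"
    then obtain tau rho where b: "b = (tau, rho)" and n: "nearrow tau la" "nearrow tau rho" "rho \<noteq> la" by auto
    note D = nearrow_common_below[OF n]
    have yr: "young rho" "young tau" using n by (auto simp: nearrow_def)
    have "ymeet rho la = tau" using young_eqI_boxes[OF young_ymeet[OF yr(1) y] yr(2)] boxes_ymeet[OF yr(1) y] D(1) by simp
    then show "(\<lambda>(nu, rho). (ymeet rho la, rho)) ((\<lambda>(tau, rho). (yjoin rho la, rho)) b) = b" using b by simp
    show "(\<lambda>(tau, rho). (yjoin rho la, rho)) b \<in> ?P1" using b D(2,3) n(3) by simp
  qed
  also have "\<dots> = (\<Sum>tau | nearrow tau la. \<Sum>rho | nearrow tau rho \<and> rho \<noteq> la. F (boxes rho - boxes tau) rho)"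
    by (rule sum.Sigma[symmetric]) (auto simp: finite_nearrow_below fin)
  finally show ?thesis .
qed

section \<open>The weighted up-sum of relative dimensions\<close>

definition weighted_up :: "complex \<Rightarrow> complex \<Rightarrow> nat list \<Rightarrow> nat list \<Rightarrow> complex" where
  "weighted_up z z' mu la = (\<Sum>nu | nearrow la nu. box_weight z z' (boxes nu - boxes la) * of_nat (dimrel mu nu))"

definition weighted_down :: "complex \<Rightarrow> complex \<Rightarrow> nat list \<Rightarrow> nat list \<Rightarrow> complex" where
  "weighted_down z z' mu la = (\<Sum>mu' | nearrow mu' mu. box_weight z z' (boxes mu - boxes mu') * of_nat (dimrel mu' la))"

text \<open>The truncated subtraction in \<open>n + 1 - m\<close> is harmless: for \<open>m > n + 1\<close> all relative
  dimensions involved vanish.\<close>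

definition up_coeff :: "complex \<Rightarrow> complex \<Rightarrow> nat \<Rightarrow> nat \<Rightarrow> complex" where
  "up_coeff z z' m n = of_nat (n + 1 - m) * (z * z' + of_nat (n + m))"

lemma weighted_down_branching:
  assumes "young la" "ysize mu \<le> ysize la"
  shows "(\<Sum>tau | nearrow tau la. weighted_down z z' mu tau) = weighted_down z z' mu la"
proof -
  have "(\<Sum>tau | nearrow tau la. weighted_down z z' mu tau)
      = (\<Sum>mu' | nearrow mu' mu. box_weight z z' (boxes mu - boxes mu') * (\<Sum>tau | nearrow tau la. of_nat (dimrel mu' tau)))"
    unfolding weighted_down_def sum_distrib_left by (rule sum.swap)
  also have "\<dots> = weighted_down z z' mu la"
    unfolding weighted_down_def
  proof (rule sum.cong[OF refl])
    fix mu' assume "mu' \<in> {mu'. nearrow mu' mu}"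
    then have "ysize mu' < ysize la" using assms by (auto simp: nearrow_def)
    then show "box_weight z z' (boxes mu - boxes mu') * (\<Sum>tau | nearrow tau la. of_nat (dimrel mu' tau)) =
         box_weight z z' (boxes mu - boxes mu') * of_nat (dimrel mu' la)"
      using dimrel_branching[OF assms(1)] by simp
  qed
  finally show ?thesis .
qed

lemma sum_up_coeff_dimrel_below:
  assumes "young la" "ysize mu \<le> ysize la"
  shows "(\<Sum>tau | nearrow tau la. up_coeff z z' (ysize mu) (ysize tau) * of_nat (dimrel mu tau))
       = (up_coeff z z' (ysize mu) (ysize la) - (z * z' + 2 * of_nat (ysize la))) * of_nat (dimrel mu la)"
proof (cases "ysize mu < ysize la")
  case True
  then obtain k where k: "ysize la = ysize mu + k + 1" using less_imp_Suc_add by fastforce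
  have "up_coeff z z' (ysize mu) (ysize la) - (z * z' + 2 * of_nat (ysize la)) = up_coeff z z' (ysize mu) (ysize la - 1)"
    unfolding up_coeff_def k by (simp add: algebra_simps)
  moreover have "ysize tau = ysize la - 1" if "nearrow tau la" for tau
    using that by (simp add: nearrow_def)
  ultimately show ?thesis
    using dimrel_branching[OF assms(1) True] by (simp add: sum_distrib_left)
next
  case False
  then have "dimrel mu tau = 0" if "nearrow tau la" for tau
    using that assms(2) by (intro dimrel_eq_0) (auto simp: nearrow_def)
  moreover have "up_coeff z z' (ysize mu) (ysize la) = z * z' + 2 * of_nat (ysize la)"
    using False assms(2) by (simp add: up_coeff_def)
  ultimately show ?thesis by simp
qed

text \<open>Expand \<open>dim(mu, nu) = dim(mu, la) + \<Sum> dim(mu, rho)\<close> over the other diagrams \<open>rho \<nearrow> nu\<close>,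
  swap the resulting two-step paths, and collect the box weights with the content identity.\<close>

lemma weighted_up_step:
  assumes y: "young la" and size: "ysize mu \<le> ysize la"
  shows "weighted_up z z' mu la
       = (z * z' + 2 * of_nat (ysize la)) * of_nat (dimrel mu la) + (\<Sum>tau | nearrow tau la. weighted_up z z' mu tau)"
proof -
  define d :: complex where "d = of_nat (dimrel mu la)"
  let ?w = "box_weight z z'"
  have other_paths: "(\<Sum>rho | nearrow P rho \<and> rho \<noteq> la. f rho) = (\<Sum>rho | nearrow P rho. f rho) - f la"
    if "nearrow P la" for P and f :: "nat list \<Rightarrow> complex"
  proof -
    have "{rho. nearrow P rho \<and> rho \<noteq> la} = {rho. nearrow P rho} - {la}" by auto
    then show ?thesis using that finite_nearrow_above[of P] by (simp add: sum_diff1)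
  qed
  have "weighted_up z z' mu la = (\<Sum>nu | nearrow la nu. ?w (boxes nu - boxes la) *
               (d + (\<Sum>rho | nearrow rho nu \<and> rho \<noteq> la. of_nat (dimrel mu rho))))"
    unfolding weighted_up_def
  proof (rule sum.cong[OF refl])
    fix nu assume nu: "nu \<in> {nu. nearrow la nu}"
    then have "young nu" "ysize mu < ysize nu" using size by (auto simp: nearrow_def)
    then have "dimrel mu nu = (\<Sum>rho | nearrow rho nu. dimrel mu rho)" by (rule dimrel_branching)
    also have "\<dots> = dimrel mu la + (\<Sum>rho\<in>{rho. nearrow rho nu} - {la}. dimrel mu rho)"
      using nu finite_nearrow_below by (intro sum.remove) auto
    also have "{rho. nearrow rho nu} - {la} = {rho. nearrow rho nu \<and> rho \<noteq> la}" by auto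
    finally show "?w (boxes nu - boxes la) * of_nat (dimrel mu nu)
        = ?w (boxes nu - boxes la) * (d + (\<Sum>rho | nearrow rho nu \<and> rho \<noteq> la. of_nat (dimrel mu rho)))"
      by (simp add: d_def)
  qed
  also have "\<dots> = (\<Sum>nu | nearrow la nu. ?w (boxes nu - boxes la)) * d
      + (\<Sum>nu | nearrow la nu. \<Sum>rho | nearrow rho nu \<and> rho \<noteq> la. ?w (boxes nu - boxes la) * of_nat (dimrel mu rho))"
    by (simp add: algebra_simps sum.distrib sum_distrib_left sum_distrib_right)
  also have "(\<Sum>nu | nearrow la nu. \<Sum>rho | nearrow rho nu \<and> rho \<noteq> la. ?w (boxes nu - boxes la) * of_nat (dimrel mu rho))
      = (\<Sum>tau | nearrow tau la. \<Sum>rho | nearrow tau rho \<and> rho \<noteq> la. ?w (boxes rho - boxes tau) * of_nat (dimrel mu rho))"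
    by (rule sum_swap_two_step_paths[OF y])
  also have "\<dots> = (\<Sum>tau | nearrow tau la. weighted_up z z' mu tau - ?w (boxes la - boxes tau) * d)"
    unfolding weighted_up_def d_def by (rule sum.cong[OF refl]) (simp add: other_paths)
  also have "\<dots> = (\<Sum>tau | nearrow tau la. weighted_up z z' mu tau) - (\<Sum>tau | nearrow tau la. ?w (boxes la - boxes tau)) * d"
    by (simp add: sum_subtractf sum_distrib_right)
  finally show ?thesis
    using content_identity[OF y, of z z'] by (simp add: d_def algebra_simps)
qed

lemma weighted_up_eq:
  assumes ymu: "young mu" and "young la"
  shows "weighted_up z z' mu la = up_coeff z z' (ysize mu) (ysize la) * of_nat (dimrel mu la) + weighted_down z z' mu la"
  using assms(2)
proof (induction "ysize la" arbitrary: la rule: less_induct)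
  case less
  note y = \<open>young la\<close>
  let ?m = "ysize mu" and ?n = "ysize la" and ?w = "box_weight z z'"
  consider "?n + 1 < ?m" | "?n + 1 = ?m" | "?m \<le> ?n" by linarith
  then show ?case
  proof cases
    case 1
    then have "dimrel mu nu = 0" if "nearrow la nu" for nu
      using that by (auto intro!: dimrel_eq_0 simp: nearrow_def)
    moreover have "dimrel mu' la = 0" if "nearrow mu' mu" for mu'
      using that 1 by (auto intro!: dimrel_eq_0 simp: nearrow_def)
    ultimately show ?thesis using 1 by (simp add: weighted_up_def weighted_down_def up_coeff_def)
  next
    case 2
    have "weighted_up z z' mu la = (\<Sum>nu | nearrow la nu. if nu = mu then ?w (boxes mu - boxes la) else 0)"
      unfolding weighted_up_def using ymu 2 by (intro sum.cong) (auto simp: dimrel_same_size nearrow_def)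
    moreover have "weighted_down z z' mu la = (\<Sum>mu' | nearrow mu' mu. if mu' = la then ?w (boxes mu - boxes la) else 0)"
      unfolding weighted_down_def using y 2 by (intro sum.cong) (auto simp: dimrel_same_size nearrow_def)
    moreover have "up_coeff z z' ?m ?n = 0" using 2 by (simp add: up_coeff_def)
    ultimately show ?thesis by (simp add: sum.delta' finite_nearrow_above finite_nearrow_below)
  next
    case 3
    have "(\<Sum>tau | nearrow tau la. weighted_up z z' mu tau)
        = (\<Sum>tau | nearrow tau la. up_coeff z z' ?m (ysize tau) * of_nat (dimrel mu tau) + weighted_down z z' mu tau)"
      using less.hyps by (intro sum.cong) (auto simp: nearrow_def)
    also have "\<dots> = (up_coeff z z' ?m ?n - (z * z' + 2 * of_nat ?n)) * of_nat (dimrel mu la) + weighted_down z z' mu la"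
      by (simp add: sum.distrib sum_up_coeff_dimrel_below[OF y 3] weighted_down_branching[OF y 3])
    finally show ?thesis
      unfolding weighted_up_step[OF y 3] by (simp add: algebra_simps)
  qed
qed

section \<open>The operator \<open>T\<^sub>n\<close> on Frobenius--Schur functions\<close>

lemma admissible_mult_pos:
  assumes "admissible z z'"
  obtains r :: real where "r > 0" "z * z' = of_real r"
  using assms unfolding admissible_def
proof (elim disjE exE conjE)
  assume "z \<notin> \<real>" "z' = cnj z"
  then have "0 < (cmod z)\<^sup>2" "z * z' = of_real ((cmod z)\<^sup>2)"
    using complex_norm_square[of z] by auto
  then show thesis using that by blast
next
  fix N :: int
  assume "z \<in> \<real>" "z' \<in> \<real>" and bounds: "of_int N < Re z" "Re z < of_int N + 1" "of_int N < Re z'" "Re z' < of_int N + 1"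
  then have "z = of_real (Re z)" "z' = of_real (Re z')"
    by (auto simp: complex_is_Real_iff complex_eq_iff)
  then have "z * z' = of_real (Re z * Re z')" by (metis of_real_mult)
  moreover have "0 < Re z * Re z'"
  proof (cases "N \<ge> 0")
    case True
    then have "0 < Re z" "0 < Re z'" using bounds by linarith+
    then show ?thesis by simp
  next
    case False
    then have "Re z < 0" "Re z' < 0" using bounds by linarith+
    then show ?thesis by (simp add: mult_neg_neg)
  qed
  ultimately show thesis using that by blast
qed

lemma admissible_denom_nonzero: "admissible z z' \<Longrightarrow> z * z' + of_nat n \<noteq> 0"
proof -
  assume "admissible z z'"
  then obtain r :: real where "r > 0" "z * z' = of_real r" by (rule admissible_mult_pos)
  then have "z * z' + of_nat n = of_real (r + real n)" "r + real n \<noteq> 0" by auto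
  then show ?thesis by (metis of_real_eq_0_iff)
qed

lemma falling_eq_0: "n < m \<Longrightarrow> falling n m = 0"
  unfolding falling_def by (rule prod_zero) (auto intro!: bexI[of _ n])

lemma falling_eq_pred: "0 < m \<Longrightarrow> falling n m = (of_nat n + 1 - of_nat m) * falling n (m - 1)"
  by (cases m) (simp_all add: falling_def algebra_simps)

lemma falling_mult_up_coeff:
  "falling n m * up_coeff z z' m n = falling n m * ((of_nat n + 1) * (z * z' + of_nat n) - of_nat m * (of_nat m - 1 + z * z'))"
proof (cases "m \<le> n")
  case True
  then obtain k where "n = m + k" using le_Suc_ex by blast
  then show ?thesis by (simp add: up_coeff_def algebra_simps)
qed (simp add: falling_eq_0)

lemma falling_mult_weighted_down:
  "falling n (ysize mu) * weighted_down z z' mu la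
     = (of_nat n + 1 - of_nat (ysize mu)) * falling n (ysize mu - 1) * weighted_down z z' mu la"
proof (cases "ysize mu = 0")
  case True
  then have "{mu'. nearrow mu' mu} = {}" by (auto simp: nearrow_def)
  then show ?thesis by (simp add: weighted_down_def)
qed (simp add: falling_eq_pred)

lemma sum_pdown_FS:
  assumes "young nu" "ysize nu = n + 1"
  shows "(\<Sum>la'\<in>YD n. pdown nu la' * FS mu la') = falling n (ysize mu) * of_nat (dimrel mu nu) / of_nat (ydim nu)"
proof -
  have "(\<Sum>la'\<in>YD n. pdown nu la' * FS mu la')
      = (\<Sum>la' | nearrow la' nu. falling n (ysize mu) * of_nat (dimrel mu la') / of_nat (ydim nu))"
  proof (rule sum.mono_neutral_cong_right)
    show "{la'. nearrow la' nu} \<subseteq> YD n" using assms by (auto simp: nearrow_def YD_def)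
    fix la' assume "la' \<in> {la'. nearrow la' nu}"
    moreover have "ydim la' > 0" if "nearrow la' nu" using ydim_pos that by (simp add: nearrow_def)
    ultimately show "pdown nu la' * FS mu la' = falling n (ysize mu) * of_nat (dimrel mu la') / of_nat (ydim nu)"
      using assms by (simp add: pdown_def FS_def nearrow_def)
  qed (auto simp: finite_YD pdown_def)
  also have "\<dots> = falling n (ysize mu) * of_nat (dimrel mu nu) / of_nat (ydim nu)"
  proof (cases "ysize mu < ysize nu")
    case True
    then show ?thesis using dimrel_branching[OF assms(1) True] by (simp add: sum_divide_distrib sum_distrib_left)
  next
    case False
    then show ?thesis using assms by (simp add: falling_eq_0)
  qed
  finally show ?thesis .
qed

lemma Top_FS:
  assumes "la \<in> YD n"
  shows "Top z z' n (FS mu) la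
       = falling n (ysize mu) / ((of_nat n + 1) * (z * z' + of_nat n) * of_nat (ydim la)) * weighted_up z z' mu la"
proof -
  have y: "young la" and size: "ysize la = n" using assms by (auto simp: YD_def)
  have "Top z z' n (FS mu) la = (\<Sum>nu | nearrow la nu. pup z z' la nu * (\<Sum>la'\<in>YD n. pdown nu la' * FS mu la'))"
    unfolding Top_def using size
    by (intro sum.mono_neutral_cong_right[OF finite_YD]) (auto simp: nearrow_def YD_def pup_def)
  also have "\<dots> = (\<Sum>nu | nearrow la nu. falling n (ysize mu) / ((of_nat n + 1) * (z * z' + of_nat n) * of_nat (ydim la))
      * (box_weight z z' (boxes nu - boxes la) * of_nat (dimrel mu nu)))"
  proof (rule sum.cong[OF refl])
    fix nu assume nu: "nu \<in> {nu. nearrow la nu}"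
    then have yn: "young nu" and size_nu: "ysize nu = n + 1" using size by (auto simp: nearrow_def)
    then have "of_nat (ydim nu) \<noteq> (0 :: complex)" using ydim_pos by simp
    then show "pup z z' la nu * (\<Sum>la'\<in>YD n. pdown nu la' * FS mu la')
        = falling n (ysize mu) / ((of_nat n + 1) * (z * z' + of_nat n) * of_nat (ydim la))
          * (box_weight z z' (boxes nu - boxes la) * of_nat (dimrel mu nu))"
      unfolding sum_pdown_FS[OF yn size_nu] using nu size by (simp add: pup_def box_weight_def ac_simps)
  qed
  finally show ?thesis by (simp add: weighted_up_def sum_distrib_left)
qed

lemma sum_box_weight_FS:
  assumes "la \<in> YD n"
  shows "(\<Sum>mu' | nearrow mu' mu. cprod z (boxes mu - boxes mu') * cprod z' (boxes mu - boxes mu') * FS mu' la)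
       = falling n (ysize mu - 1) / of_nat (ydim la) * weighted_down z z' mu la"
  unfolding weighted_down_def sum_distrib_left
proof (rule sum.cong[OF refl])
  fix mu' assume "mu' \<in> {mu'. nearrow mu' mu}"
  then have "ysize mu' = ysize mu - 1" by (simp add: nearrow_def)
  then show "cprod z (boxes mu - boxes mu') * cprod z' (boxes mu - boxes mu') * FS mu' la
      = falling n (ysize mu - 1) / of_nat (ydim la) * (box_weight z z' (boxes mu - boxes mu') * of_nat (dimrel mu' la))"
    using assms by (simp add: FS_def YD_def box_weight_def)
qed

theorem lemma5p2:
  fixes z z' :: complex and mu la :: "nat list" and n :: nat
  assumes "admissible z z'"
    and "young mu"
    and "n \<ge> 1"
    and "la \<in> YD n"
  shows "Top z z' n (FS mu) la - FS mu la =
     - (of_nat (ysize mu) * (of_nat (ysize mu) - 1 + z * z')) / ((of_nat n + 1) * (z * z' + of_nat n)) * FS mu la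
     + (of_nat n + 1 - of_nat (ysize mu)) / ((of_nat n + 1) * (z * z' + of_nat n)) *
       (\<Sum>mu'\<in>{mu'. nearrow mu' mu}.
          cprod z (boxes mu - boxes mu') * cprod z' (boxes mu - boxes mu') * FS mu' la)"
proof -
  have y: "young la" and size: "ysize la = n" using assms(4) by (auto simp: YD_def)
  define F where "F = falling n (ysize mu)"
  define F' where "F' = falling n (ysize mu - 1)"
  define D :: complex where "D = of_nat (ydim la)"
  define c where "c = (of_nat n + 1) * (z * z' + of_nat n)"
  define G where "G = up_coeff z z' (ysize mu) n"
  define d :: complex where "d = of_nat (dimrel mu la)"
  define R where "R = weighted_down z z' mu la"
  define M where "M = - (of_nat (ysize mu) * (of_nat (ysize mu) - 1 + z * z'))"
  define K :: complex where "K = of_nat n + 1 - of_nat (ysize mu)"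
  have "(of_nat (n + 1) :: complex) \<noteq> 0" by (simp only: of_nat_eq_0_iff)
  then have c: "c \<noteq> 0" using admissible_denom_nonzero[OF assms(1)] by (simp add: c_def add.commute)
  have D: "D \<noteq> 0" using ydim_pos[OF y] by (simp add: D_def)
  have coeff: "F * G - c * F = M * F"
    using falling_mult_up_coeff[of n "ysize mu" z z'] by (simp add: F_def G_def c_def M_def algebra_simps)
  have down: "F * R = K * F' * R"
    unfolding F_def F'_def R_def K_def by (rule falling_mult_weighted_down)
  have "F / (c * D) * (G * d + R) - F * d / D = ((F * G - c * F) * d + F * R) / (c * D)"
    using c D by (simp add: field_simps)
  also have "\<dots> = (M * F * d + K * F' * R) / (c * D)"
    unfolding coeff down ..
  also have "\<dots> = M / c * (F * d / D) + K / c * (F' / D * R)"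
    using c D by (simp add: field_simps)
  finally show ?thesis
    unfolding Top_FS[OF assms(4)] weighted_up_eq[OF assms(2) y] sum_box_weight_FS[OF assms(4)]
    unfolding FS_def size
    by (simp add: F_def F'_def D_def c_def G_def d_def R_def M_def K_def)
qed

end
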